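(* Let $R$ be a right $\sigma$-reversible ring, where $\sigma$ is an endomorphism of $R$ with $\sigma(1)=1$. If $R[[x;\sigma]]$ is a p.p.-ring, then $R$ is a p.p.-ring.
   Context: All rings are associative with identity; $\sigma$ denotes a nonzero, non-identity ring endomorphism of $R$. The skew power series ring $R[[x;\sigma]]$ consists of all formal series $\sum_{i=0}^\infty a_i x^i$ with $a_i\in R$, added termwise and multiplied using distributivity and the rule $xa=\sigma(a)x$ for $a\in R$. $R$ is right $\sigma$-reversible if for all $a,b\in R$, $ab=0$ implies $b\sigma(a)=0$. A ring $S$ is a right (left) p.p.-ring if the right (left) annihilator of every element of $S$ is generated, as a right (left) ideal, by an idempotent; $S$ is a p.p.-ring if it is both a right and a left p.p.-ring. *)

theory Defs
  imports Main
begin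

definition ring_endo :: "('a::ring_1 \<Rightarrow> 'a) \<Rightarrow> bool" where
  "ring_endo \<sigma> \<longleftrightarrow> (\<forall>a b. \<sigma> (a + b) = \<sigma> a + \<sigma> b) \<and> (\<forall>a b. \<sigma> (a * b) = \<sigma> a * \<sigma> b)"

definition right_sigma_reversible :: "('a::ring_1 \<Rightarrow> 'a) \<Rightarrow> bool" where
  "right_sigma_reversible \<sigma> \<longleftrightarrow> (\<forall>a b. a * b = 0 \<longrightarrow> b * \<sigma> a = 0)"

text \<open>Skew power series ring R[[x;sigma]]: a series sum a_i x^i is represented by its
  coefficient function nat => R; addition is termwise, zero is the zero function, and
  multiplication follows x a = sigma(a) x, i.e. (a_i x^i)(b_j x^j) = a_i sigma^i(b_j) x^(i+j).\<close>
definition skew_mult :: "('a::ring_1 \<Rightarrow> 'a) \<Rightarrow> (nat \<Rightarrow> 'a) \<Rightarrow> (nat \<Rightarrow> 'a) \<Rightarrow> (nat \<Rightarrow> 'a)" where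
  "skew_mult \<sigma> f g = (\<lambda>n. \<Sum>i\<le>n. f i * (\<sigma> ^^ i) (g (n - i)))"

definition skew_zero :: "nat \<Rightarrow> 'a::ring_1" where
  "skew_zero = (\<lambda>_. 0)"

text \<open>p.p.-rings, for a ring given by its multiplication and zero (carrier = whole type).\<close>
definition right_pp :: "('b \<Rightarrow> 'b \<Rightarrow> 'b) \<Rightarrow> 'b \<Rightarrow> bool" where
  "right_pp mult z \<longleftrightarrow> (\<forall>a. \<exists>e. mult e e = e \<and> {b. mult a b = z} = {mult e c | c. True})"

definition left_pp :: "('b \<Rightarrow> 'b \<Rightarrow> 'b) \<Rightarrow> 'b \<Rightarrow> bool" where
  "left_pp mult z \<longleftrightarrow> (\<forall>a. \<exists>e. mult e e = e \<and> {b. mult b a = z} = {mult c e | c. True})"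

definition pp_ring :: "('b \<Rightarrow> 'b \<Rightarrow> 'b) \<Rightarrow> 'b \<Rightarrow> bool" where
  "pp_ring mult z \<longleftrightarrow> right_pp mult z \<and> left_pp mult z"

end

theory Submission
  imports Defs
begin

text \<open>
  Write S = R[[x;\<sigma>]].  The constant-term map \<epsilon> : S \<rightarrow> R, f \<mapsto> f 0, is
  multiplicative, and the constant series \<iota> a = a + 0x + 0x^2 + ... satisfy
  \<iota> a \<cdot> \<iota> b = \<iota> (ab), \<epsilon> (\<iota> a) = a, and \<iota> 1 is the identity of S (using \<sigma>(1) = 1).
  From such data alone, right p.p. descends from S to R: if r.ann_S(\<iota> a) = eS, then
  \<epsilon> e is idempotent and r.ann_R(a) = (\<epsilon> e)R.  Left p.p. is right p.p.
  for the opposite multiplication, so the same lemma applied to the opposite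
  multiplications of S and R yields left p.p. for R.
\<close>

text \<open>If S is right p.p. and R is a retract of S via a multiplicative map \<epsilon> with a
  section \<iota> that preserves zero products, and S has a right identity, then R is
  right p.p.: the idempotent generating r.ann_R(a) is the image of the one for \<iota> a.\<close>
lemma right_pp_descends:
  fixes multS :: "'b \<Rightarrow> 'b \<Rightarrow> 'b" and multR :: "'a \<Rightarrow> 'a \<Rightarrow> 'a"
  assumes pp: "right_pp multS zS"
    and eps_mult: "\<And>f g. \<epsilon> (multS f g) = multR (\<epsilon> f) (\<epsilon> g)"
    and eps_zero: "\<epsilon> zS = zR"
    and eps_iota: "\<And>a. \<epsilon> (\<iota> a) = a"
    and iota_zero_product: "\<And>a b. multR a b = zR \<Longrightarrow> multS (\<iota> a) (\<iota> b) = zS"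
    and right_unit: "\<And>f. multS f u = f"
    and assoc: "\<And>x y z. multR (multR x y) z = multR x (multR y z)"
    and zero_left: "\<And>x. multR zR x = zR"
  shows "right_pp multR zR"
  unfolding right_pp_def
proof
  fix a
  obtain e where idem: "multS e e = e"
    and ann: "{b. multS (\<iota> a) b = zS} = {multS e c | c. True}"
    using pp unfolding right_pp_def by blast
  have "e \<in> {multS e c | c. True}"
    using right_unit[of e] by (metis (mono_tags) mem_Collect_eq)
  then have "multS (\<iota> a) e = zS" using ann by blast
  then have a_kills: "multR a (\<epsilon> e) = zR"
    using eps_mult[of "\<iota> a" e] by (simp add: eps_zero eps_iota)
  have "{b. multR a b = zR} = {multR (\<epsilon> e) c | c. True}"
  proof (intro equalityI subsetI)
    fix b assume "b \<in> {b. multR a b = zR}"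
    then have "\<iota> b \<in> {multS e c | c. True}"
      using ann iota_zero_product by blast
    then obtain c where "\<iota> b = multS e c" by blast
    then have "b = multR (\<epsilon> e) (\<epsilon> c)" by (metis eps_iota eps_mult)
    then show "b \<in> {multR (\<epsilon> e) c | c. True}" by blast
  next
    fix b assume "b \<in> {multR (\<epsilon> e) c | c. True}"
    then obtain c where "b = multR (\<epsilon> e) c" by blast
    then have "multR a b = multR (multR a (\<epsilon> e)) c" by (simp add: assoc)
    then show "b \<in> {b. multR a b = zR}" by (simp add: a_kills zero_left)
  qed
  moreover have "multR (\<epsilon> e) (\<epsilon> e) = \<epsilon> e"
    by (metis eps_mult idem)
  ultimately show "\<exists>e. multR e e = e \<and> {b. multR a b = zR} = {multR e c | c. True}"
    by blast
qed

lemma left_pp_iff_right_pp_opposite: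
  "left_pp mult z \<longleftrightarrow> right_pp (\<lambda>x y. mult y x) z"
  by (simp add: left_pp_def right_pp_def)

lemma left_pp_descends:
  fixes multS :: "'b \<Rightarrow> 'b \<Rightarrow> 'b" and multR :: "'a \<Rightarrow> 'a \<Rightarrow> 'a"
  assumes pp: "left_pp multS zS"
    and eps_mult: "\<And>f g. \<epsilon> (multS f g) = multR (\<epsilon> f) (\<epsilon> g)"
    and eps_zero: "\<epsilon> zS = zR"
    and eps_iota: "\<And>a. \<epsilon> (\<iota> a) = a"
    and iota_zero_product: "\<And>a b. multR a b = zR \<Longrightarrow> multS (\<iota> a) (\<iota> b) = zS"
    and left_unit: "\<And>f. multS u f = f"
    and assoc: "\<And>x y z. multR (multR x y) z = multR x (multR y z)"
    and zero_right: "\<And>x. multR x zR = zR"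
  shows "left_pp multR zR"
  using pp unfolding left_pp_iff_right_pp_opposite
  by (rule right_pp_descends[where \<epsilon> = \<epsilon> and \<iota> = \<iota> and u = u])
     (simp_all add: eps_mult eps_zero eps_iota iota_zero_product left_unit assoc zero_right)

definition const_series :: "'a::ring_1 \<Rightarrow> nat \<Rightarrow> 'a" where
  "const_series c = (\<lambda>n. if n = 0 then c else 0)"

lemma skew_mult_constant_term: "skew_mult \<sigma> f g 0 = f 0 * g 0"
  by (simp add: skew_mult_def)

lemma skew_mult_const_left: "skew_mult \<sigma> (const_series a) g = (\<lambda>n. a * g n)"
proof
  fix n
  have "skew_mult \<sigma> (const_series a) g n = (\<Sum>i\<le>n. if i = 0 then a * g n else 0)"
    unfolding skew_mult_def const_series_def by (rule sum.cong) auto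
  then show "skew_mult \<sigma> (const_series a) g n = a * g n" by simp
qed

lemma skew_mult_const_const:
  "skew_mult \<sigma> (const_series a) (const_series b) = const_series (a * b)"
  unfolding skew_mult_const_left by (auto simp: const_series_def)

lemma ring_endo_zero: "ring_endo \<sigma> \<Longrightarrow> \<sigma> 0 = 0"
  unfolding ring_endo_def by (metis add_cancel_right_right add_0)

lemma ring_endo_iterate_zero: "ring_endo \<sigma> \<Longrightarrow> (\<sigma> ^^ n) 0 = 0"
  by (induction n) (auto simp: ring_endo_zero)

lemma iterate_one:
  fixes \<sigma> :: "'a::ring_1 \<Rightarrow> 'a"
  shows "\<sigma> 1 = 1 \<Longrightarrow> (\<sigma> ^^ n) 1 = 1"
  by (induction n) simp_all

lemma skew_mult_const_right:
  assumes "ring_endo \<sigma>"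
  shows "skew_mult \<sigma> f (const_series b) = (\<lambda>n. f n * (\<sigma> ^^ n) b)"
proof
  fix n
  have "skew_mult \<sigma> f (const_series b) n = (\<Sum>i\<le>n. if i = n then f n * (\<sigma> ^^ n) b else 0)"
    unfolding skew_mult_def const_series_def
    by (rule sum.cong) (auto simp: ring_endo_iterate_zero[OF assms])
  then show "skew_mult \<sigma> f (const_series b) n = f n * (\<sigma> ^^ n) b" by simp
qed

lemma skew_mult_one_right:
  "ring_endo \<sigma> \<Longrightarrow> \<sigma> 1 = 1 \<Longrightarrow> skew_mult \<sigma> f (const_series 1) = f"
  by (simp add: skew_mult_const_right iterate_one)

lemma skew_mult_one_left: "skew_mult \<sigma> (const_series 1) f = f"
  by (simp add: skew_mult_const_left)

theorem theorem3p4: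
  fixes \<sigma> :: "'a::ring_1 \<Rightarrow> 'a"
  assumes "ring_endo \<sigma>"
    and "\<sigma> 1 = 1"
    and "\<sigma> \<noteq> (\<lambda>_. 0)"
    and "\<sigma> \<noteq> id"
    and "right_sigma_reversible \<sigma>"
    and "pp_ring (skew_mult \<sigma>) skew_zero"
  shows "pp_ring ((*) :: 'a \<Rightarrow> 'a \<Rightarrow> 'a) 0"
proof -
  let ?\<epsilon> = "\<lambda>f::nat \<Rightarrow> 'a. f 0"
  have eps_mult: "?\<epsilon> (skew_mult \<sigma> f g) = ?\<epsilon> f * ?\<epsilon> g" for f g
    by (rule skew_mult_constant_term)
  have eps_zero: "?\<epsilon> skew_zero = 0"
    by (simp add: skew_zero_def)
  have eps_iota: "?\<epsilon> (const_series a) = a" for a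
    by (simp add: const_series_def)
  have iota_zero_product: "a * b = 0 \<Longrightarrow>
      skew_mult \<sigma> (const_series a) (const_series b) = skew_zero" for a b :: 'a
    unfolding skew_mult_const_const by (simp add: const_series_def skew_zero_def)
  have S_right_pp: "right_pp (skew_mult \<sigma>) skew_zero"
    and S_left_pp: "left_pp (skew_mult \<sigma>) skew_zero"
    using assms(6) by (simp_all add: pp_ring_def)
  have "right_pp ((*) :: 'a \<Rightarrow> 'a \<Rightarrow> 'a) 0"
    by (rule right_pp_descends[OF S_right_pp eps_mult eps_zero eps_iota iota_zero_product
          skew_mult_one_right[OF assms(1,2)]]) (simp_all add: mult.assoc)
  moreover have "left_pp ((*) :: 'a \<Rightarrow> 'a \<Rightarrow> 'a) 0"
    by (rule left_pp_descends[OF S_left_pp eps_mult eps_zero eps_iota iota_zero_product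
          skew_mult_one_left]) (simp_all add: mult.assoc)
  ultimately show ?thesis by (simp add: pp_ring_def)
qed

end
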